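(* Let $0<\alpha<1/2$, $p=n^{-\alpha}$, fix an integer $l\ge 1$, set $m=\lfloor (n-1)/(l+2)\rfloor$, and fix (for each $n$) a family of pairwise disjoint sets of coordinates $A,B,C_1,\dots,C_l\subset\{1,\dots,n\}$, each of size $m$. Call a vertex $v$ of $H_{n,p}$ good if there are at least $2m$ distinct vertices $w$ such that $w$ differs from $v$ in exactly two coordinates, both belonging to $A$, and $d_{H_{n,p}}(v,w)=2$. Then, with probability tending to $1$ as $n\to\infty$, every vertex $v$ of $H_n$ has a good vertex $u$ that differs from $v$ in exactly one coordinate, that coordinate belonging to $B$.
   Context: $H_n$ is the hypercube graph on $\{0,1\}^n$ (vectors adjacent iff they differ in exactly one coordinate). $H_{n,p}$ is obtained from $H_n$ by Bernoulli bond percolation: each edge is kept independently with probability $p$; $d_{H_{n,p}}$ denotes the graph distance in $H_{n,p}$. *)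

theory Defs
  imports "HOL-Probability.Probability" "HOL-Library.Extended_Nat"
begin

text \<open>Vertices of the hypercube H_n: a vector in {0,1}^n is encoded as the set of
coordinates (from {0..<n}) where it equals 1.\<close>
definition hc_vertices :: "nat \<Rightarrow> nat set set" where
  "hc_vertices n = {x. x \<subseteq> {0..<n}}"

definition hc_diff :: "nat set \<Rightarrow> nat set \<Rightarrow> nat set" where
  "hc_diff x y = (x - y) \<union> (y - x)"

definition hc_edges :: "nat \<Rightarrow> nat set set set" where
  "hc_edges n = {{x, y} | x y. x \<in> hc_vertices n \<and> y \<in> hc_vertices n \<and> card (hc_diff x y) = 1}"

text \<open>Bond percolation: each edge independently open with probability p.
  A configuration is a function from edges to bool (True = kept).\<close>
definition percolation :: "nat \<Rightarrow> real \<Rightarrow> (nat set set \<Rightarrow> bool) pmf" where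
  "percolation n p = Pi_pmf (hc_edges n) False (\<lambda>_. bernoulli_pmf p)"

definition perc_adj :: "nat \<Rightarrow> (nat set set \<Rightarrow> bool) \<Rightarrow> nat set \<Rightarrow> nat set \<Rightarrow> bool" where
  "perc_adj n \<omega> x y \<longleftrightarrow> {x, y} \<in> hc_edges n \<and> \<omega> {x, y}"

definition perc_dist :: "nat \<Rightarrow> (nat set set \<Rightarrow> bool) \<Rightarrow> nat set \<Rightarrow> nat set \<Rightarrow> enat" where
  "perc_dist n \<omega> x y =
     (if \<exists>k. (perc_adj n \<omega> ^^ k) x y then enat (LEAST k. (perc_adj n \<omega> ^^ k) x y) else \<infinity>)"

definition good_vertex :: "nat \<Rightarrow> (nat set set \<Rightarrow> bool) \<Rightarrow> nat set \<Rightarrow> nat \<Rightarrow> nat set \<Rightarrow> bool" where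
  "good_vertex n \<omega> A m v \<longleftrightarrow>
     card {w \<in> hc_vertices n. card (hc_diff v w) = 2 \<and> hc_diff v w \<subseteq> A \<and> perc_dist n \<omega> v w = 2} \<ge> 2 * m"

end

theory Submission
  imports Defs "HOL-Real_Asymp.Real_Asymp"
begin

text \<open>Write u + a for the vertex obtained from u by flipping coordinate a. Split the m coordinates
of A into an upper half J and four disjoint blocks S_0, ..., S_3 of m div 8 coordinates each from the
lower half. A vertex u is good as soon as for every b in J and every block S_r some a in S_r gives an
open path u, u + a, u + a + b: the 4 |J| >= 2m endpoints are distinct and at distance 2 from u.
The paths for distinct a are edge-disjoint, so for fixed (b, r) they all fail with probability
(1 - p^2)^(m div 8), and u fails with probability at most c = 4m (1 - p^2)^(m div 8).
For a vertex v, the events for its neighbours v + b, b in B, depend on the edges of the A-subcubes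
through the v + b, which are pairwise disjoint because A and B are; hence v has no good B-neighbour
with probability at most c^m, and the union bound over all vertices leaves 2^n c^m. As p^2 m is of
order n^(1 - 2 alpha), which grows faster than log n, c tends to 0 and 2^n c^m <= 2^(l+2) (2^(l+2) c)^m
tends to 0.\<close>

section \<open>The hypercube\<close>

definition hc_flip :: "nat set \<Rightarrow> nat \<Rightarrow> nat set" where
  "hc_flip u i = (if i \<in> u then u - {i} else insert i u)"

lemma hc_diff_sym: "hc_diff x y = hc_diff y x"
  unfolding hc_diff_def by auto

lemma hc_diff_self [simp]: "hc_diff x x = {}"
  unfolding hc_diff_def by auto

lemma hc_diff_eq_empty_iff [simp]: "hc_diff x y = {} \<longleftrightarrow> x = y"
  unfolding hc_diff_def by auto

lemma hc_diff_triangle: "hc_diff x z \<subseteq> hc_diff x y \<union> hc_diff y z"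
  unfolding hc_diff_def by auto

lemma hc_diff_flip [simp]: "hc_diff u (hc_flip u i) = {i}"
  unfolding hc_diff_def hc_flip_def by auto

lemma hc_diff_flip_flip: "i \<noteq> j \<Longrightarrow> hc_diff u (hc_flip (hc_flip u i) j) = {i, j}"
  unfolding hc_diff_def hc_flip_def by auto

lemma hc_diff_flips: "i \<noteq> j \<Longrightarrow> hc_diff (hc_flip u i) (hc_flip u j) = {i, j}"
  unfolding hc_diff_def hc_flip_def by auto

lemma hc_flip_neq [simp]: "hc_flip u i \<noteq> u"
  unfolding hc_flip_def by auto

lemma hc_flip_vertex: "u \<in> hc_vertices n \<Longrightarrow> i < n \<Longrightarrow> hc_flip u i \<in> hc_vertices n"
  unfolding hc_vertices_def hc_flip_def by auto

lemma hc_vertices_eq_Pow: "hc_vertices n = Pow {0..<n}"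
  unfolding hc_vertices_def by auto

lemma finite_hc_vertices [simp]: "finite (hc_vertices n)"
  by (simp add: hc_vertices_eq_Pow)

lemma card_hc_vertices: "card (hc_vertices n) = 2 ^ n"
  by (simp add: hc_vertices_eq_Pow card_Pow)

lemma finite_hc_edges [simp]: "finite (hc_edges n)"
proof (rule finite_subset)
  show "hc_edges n \<subseteq> Pow (hc_vertices n)"
    unfolding hc_edges_def by auto
qed simp

lemma hc_edgeI:
  "x \<in> hc_vertices n \<Longrightarrow> y \<in> hc_vertices n \<Longrightarrow> card (hc_diff x y) = 1 \<Longrightarrow> {x, y} \<in> hc_edges n"
  unfolding hc_edges_def by blast

lemma card_hc_diff_edge: "{x, y} \<in> hc_edges n \<Longrightarrow> card (hc_diff x y) = 1"
  unfolding hc_edges_def by (auto simp: doubleton_eq_iff hc_diff_sym)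

lemma hc_edge_nonempty: "e \<in> hc_edges n \<Longrightarrow> e \<noteq> {}"
  unfolding hc_edges_def by auto

lemma hc_edge_flip: "u \<in> hc_vertices n \<Longrightarrow> i < n \<Longrightarrow> {u, hc_flip u i} \<in> hc_edges n"
  by (intro hc_edgeI hc_flip_vertex) auto

lemma perc_dist_eq_2:
  assumes "{u, y} \<in> hc_edges n" "{y, w} \<in> hc_edges n" "\<omega> {u, y}" "\<omega> {y, w}"
    and "card (hc_diff u w) = 2"
  shows "perc_dist n \<omega> u w = 2"
proof -
  let ?R = "perc_adj n \<omega>"
  have path: "(?R ^^ 2) u w"
    using assms(1-4) by (auto simp: numeral_2_eq_2 relcompp.simps perc_adj_def)
  have "\<not> (?R ^^ k) u w" if "k < 2" for k
  proof -
    have "u \<noteq> w" using assms(5) by (metis card.empty hc_diff_eq_empty_iff zero_neq_numeral)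
    moreover have "\<not> ?R u w" using assms(5) card_hc_diff_edge[of u w n] by (auto simp: perc_adj_def)
    ultimately show ?thesis using that by (auto simp: less_2_cases_iff)
  qed
  then have "(LEAST k. (?R ^^ k) u w) = 2"
    using path by (intro Least_equality) (auto simp: not_less[symmetric])
  then show ?thesis
    unfolding perc_dist_def using path by (auto simp: numeral_eq_enat)
qed

definition path2_edges :: "nat set \<Rightarrow> nat \<Rightarrow> nat \<Rightarrow> nat set set set" where
  "path2_edges u a b = {{u, hc_flip u a}, {hc_flip u a, hc_flip (hc_flip u a) b}}"

lemma path2_edges_subset:
  "u \<in> hc_vertices n \<Longrightarrow> a < n \<Longrightarrow> b < n \<Longrightarrow> path2_edges u a b \<subseteq> hc_edges n"
  unfolding path2_edges_def by (auto intro: hc_edge_flip hc_flip_vertex)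

lemma hc_diff_path2_edges:
  assumes "a \<noteq> b" "e \<in> path2_edges u a b"
  shows "a \<in> \<Union> (hc_diff u ` e)" "\<Union> (hc_diff u ` e) \<subseteq> {a, b}"
  using assms by (auto simp: path2_edges_def hc_diff_flip_flip)

lemma card_path2_edges:
  assumes "a \<noteq> b"
  shows "card (path2_edges u a b) = 2"
proof -
  have "u \<notin> {hc_flip u a, hc_flip (hc_flip u a) b}"
    using hc_diff_flip_flip[OF assms, of u] hc_flip_neq[of u a, symmetric] by force
  then show ?thesis
    unfolding path2_edges_def by (subst card_2_iff) blast
qed

lemma path2_edges_disjoint:
  assumes "a \<noteq> b" "a' \<noteq> b" "a \<noteq> a'"
  shows "path2_edges u a b \<inter> path2_edges u a' b = {}"
  using hc_diff_path2_edges[OF assms(1)] hc_diff_path2_edges[OF assms(2)] assms by blast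

definition dist_2_vertices :: "nat \<Rightarrow> (nat set set \<Rightarrow> bool) \<Rightarrow> nat set \<Rightarrow> nat set \<Rightarrow> nat set set" where
  "dist_2_vertices n \<omega> A u =
     {w \<in> hc_vertices n. card (hc_diff u w) = 2 \<and> hc_diff u w \<subseteq> A \<and> perc_dist n \<omega> u w = 2}"

lemma good_vertex_iff_card_dist_2_vertices:
  "good_vertex n \<omega> A m u \<longleftrightarrow> 2 * m \<le> card (dist_2_vertices n \<omega> A u)"
  unfolding good_vertex_def dist_2_vertices_def ..

lemma finite_dist_2_vertices [simp]: "finite (dist_2_vertices n \<omega> A u)"
  unfolding dist_2_vertices_def by simp

lemma path2_end_in_dist_2_vertices:
  assumes "u \<in> hc_vertices n" "A \<subseteq> {0..<n}" "a \<in> A" "b \<in> A" "a \<noteq> b"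
    and "\<forall>e \<in> path2_edges u a b. \<omega> e"
  shows "hc_flip (hc_flip u a) b \<in> dist_2_vertices n \<omega> A u"
proof -
  have "a < n" "b < n"
    using assms(2-4) by auto
  then have "perc_dist n \<omega> u (hc_flip (hc_flip u a) b) = 2"
    using assms(1,5,6) path2_edges_subset[OF assms(1)]
    by (intro perc_dist_eq_2[where y = "hc_flip u a"]) (auto simp: path2_edges_def hc_diff_flip_flip)
  with \<open>a < n\<close> \<open>b < n\<close> show ?thesis
    using assms unfolding dist_2_vertices_def by (auto simp: hc_diff_flip_flip intro: hc_flip_vertex)
qed

definition subcube_edges :: "nat \<Rightarrow> nat set \<Rightarrow> nat set \<Rightarrow> nat set set set" where
  "subcube_edges n A u = {e \<in> hc_edges n. \<forall>x\<in>e. hc_diff u x \<subseteq> A}"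

lemma subcube_edges_disjoint:
  assumes "\<not> hc_diff u u' \<subseteq> A"
  shows "subcube_edges n A u \<inter> subcube_edges n A u' = {}"
proof (rule ccontr)
  assume "subcube_edges n A u \<inter> subcube_edges n A u' \<noteq> {}"
  then obtain e x where "e \<in> subcube_edges n A u" "e \<in> subcube_edges n A u'" "x \<in> e"
    unfolding subcube_edges_def by (blast dest: hc_edge_nonempty)
  then have "hc_diff u x \<subseteq> A" "hc_diff u' x \<subseteq> A"
    unfolding subcube_edges_def by auto
  then have "hc_diff u x \<subseteq> A" "hc_diff x u' \<subseteq> A"
    by (simp_all add: hc_diff_sym)
  then show False
    using assms hc_diff_triangle[of u u' x] by blast
qed

lemma path2_edges_subset_subcube_edges:
  assumes "u \<in> hc_vertices n" "A \<subseteq> {0..<n}" "a \<in> A" "b \<in> A" "a \<noteq> b"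
  shows "path2_edges u a b \<subseteq> subcube_edges n A u"
proof -
  have "path2_edges u a b \<subseteq> hc_edges n"
    using assms by (intro path2_edges_subset) auto
  then show ?thesis
    unfolding subcube_edges_def using hc_diff_path2_edges(2)[OF assms(5)] assms(3,4) by blast
qed

section \<open>Independence in product measures\<close>

lemma measure_pair_pmf_Times:
  "measure_pmf.prob (pair_pmf M N) (A \<times> B) = measure_pmf.prob M A * measure_pmf.prob N B"
proof -
  have "measure_pmf.prob (pair_pmf M N) (A \<times> B) =
        measure_pmf.prob (pair_pmf M N) ((A \<inter> set_pmf M) \<times> (B \<inter> set_pmf N))"
    by (subst measure_Int_set_pmf[symmetric]) (auto intro: arg_cong2[where f = measure])
  also have "\<dots> = measure_pmf.prob M (A \<inter> set_pmf M) * measure_pmf.prob N (B \<inter> set_pmf N)"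
    by (intro measure_pmf_prob_product) auto
  finally show ?thesis
    by (simp add: measure_Int_set_pmf)
qed

lemma prob_Pi_pmf_conj_indep:
  fixes p :: "'a \<Rightarrow> 'b pmf"
  assumes "finite I" "D \<subseteq> I"
    and P: "\<And>f g. \<forall>x\<in>D. f x = g x \<Longrightarrow> P f = P g"
    and R: "\<And>f g. \<forall>x\<in>I - D. f x = g x \<Longrightarrow> R f = R g"
  shows "measure_pmf.prob (Pi_pmf I dflt p) {f. P f \<and> R f} =
         measure_pmf.prob (Pi_pmf I dflt p) {f. P f} * measure_pmf.prob (Pi_pmf I dflt p) {f. R f}"
proof -
  define glue :: "('a \<Rightarrow> 'b) \<times> ('a \<Rightarrow> 'b) \<Rightarrow> 'a \<Rightarrow> 'b"
    where "glue = (\<lambda>(f, g) x. if x \<in> D then f x else g x)"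
  define M where "M = pair_pmf (Pi_pmf D dflt p) (Pi_pmf (I - D) dflt p)"
  have "Pi_pmf (D \<union> (I - D)) dflt p = map_pmf glue M"
    unfolding glue_def M_def using assms(1,2) by (intro Pi_pmf_union) (auto dest: finite_subset)
  then have Pi_eq: "Pi_pmf I dflt p = map_pmf glue M"
    using assms(2) by (simp add: Un_absorb1)
  have "P (glue fg) = P (fst fg)" "R (glue fg) = R (snd fg)" for fg
    by (rule P, simp add: glue_def split: prod.split) (rule R, simp add: glue_def split: prod.split)
  then have "glue -` {f. P f \<and> R f} = {f. P f} \<times> {g. R g}"
    and "glue -` {f. P f} = {f. P f} \<times> UNIV" and "glue -` {f. R f} = UNIV \<times> {g. R g}"
    by auto
  then show ?thesis
    by (simp add: Pi_eq M_def measure_pair_pmf_Times)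
qed

lemma prob_Pi_pmf_Ball_indep:
  fixes D :: "'k \<Rightarrow> 'a set" and Q :: "'k \<Rightarrow> ('a \<Rightarrow> 'b) \<Rightarrow> bool"
  assumes "finite I" "finite K" "\<And>k. k \<in> K \<Longrightarrow> D k \<subseteq> I" "disjoint_family_on D K"
    and "\<And>k f g. k \<in> K \<Longrightarrow> \<forall>x\<in>D k. f x = g x \<Longrightarrow> Q k f = Q k g"
  shows "measure_pmf.prob (Pi_pmf I dflt p) {f. \<forall>k\<in>K. Q k f} =
         (\<Prod>k\<in>K. measure_pmf.prob (Pi_pmf I dflt p) {f. Q k f})"
  using assms(2-5)
proof (induction K rule: finite_induct)
  case (insert k K)
  let ?M = "Pi_pmf I dflt p"
  have rest: "(\<forall>k'\<in>K. Q k' f) = (\<forall>k'\<in>K. Q k' g)" if "\<forall>x\<in>I - D k. f x = g x" for f g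
  proof -
    have "D k' \<subseteq> I - D k" if "k' \<in> K" for k'
      using insert.prems(1,2) insert.hyps(2) that by (auto simp: disjoint_family_on_def)
    with that show ?thesis
      using insert.prems(3) by (metis insertCI subsetD)
  qed
  have "measure_pmf.prob ?M {f. \<forall>k'\<in>insert k K. Q k' f} =
        measure_pmf.prob ?M {f. Q k f \<and> (\<forall>k'\<in>K. Q k' f)}"
    by simp
  also have "\<dots> = measure_pmf.prob ?M {f. Q k f} * measure_pmf.prob ?M {f. \<forall>k'\<in>K. Q k' f}"
    using insert.prems by (intro prob_Pi_pmf_conj_indep assms(1) rest) auto
  also have "measure_pmf.prob ?M {f. \<forall>k'\<in>K. Q k' f} = (\<Prod>k'\<in>K. measure_pmf.prob ?M {f. Q k' f})"
    using insert.prems by (intro insert.IH) (auto simp: disjoint_family_on_def)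
  finally show ?case
    using insert.hyps by simp
qed simp

lemma prob_Pi_pmf_bernoulli_all:
  assumes "finite I" "E \<subseteq> I" "0 \<le> q" "q \<le> 1"
  shows "measure_pmf.prob (Pi_pmf I False (\<lambda>_. bernoulli_pmf q)) {f. \<forall>e\<in>E. f e} = q ^ card E"
proof -
  let ?M = "Pi_pmf I False (\<lambda>_. bernoulli_pmf q)"
  have single: "measure_pmf.prob ?M {f. f e} = q" if "e \<in> I" for e
  proof -
    have "measure_pmf.prob ?M {f. f e} = measure_pmf.prob (map_pmf (\<lambda>f. f e) ?M) {True}"
      by (simp add: vimage_def)
    also have "\<dots> = q"
      using assms that by (subst Pi_pmf_component) (auto simp: measure_pmf_single)
    finally show ?thesis .
  qed
  have "measure_pmf.prob ?M {f. \<forall>e\<in>E. f e} = (\<Prod>e\<in>E. measure_pmf.prob ?M {f. f e})"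
    using assms(1,2) by (intro prob_Pi_pmf_Ball_indep[where D = "\<lambda>e. {e}"])
      (auto simp: disjoint_family_on_def dest: finite_subset)
  also have "\<dots> = q ^ card E"
    using assms(2) single by (simp add: subset_iff)
  finally show ?thesis .
qed

lemma prob_path2_not_open:
  fixes q :: real
  assumes "u \<in> hc_vertices n" "a < n" "b < n" "a \<noteq> b" "0 \<le> q" "q \<le> 1"
  shows "measure_pmf.prob (Pi_pmf (hc_edges n) False (\<lambda>_. bernoulli_pmf q))
           {\<omega>. \<not> (\<forall>e\<in>path2_edges u a b. \<omega> e)} = 1 - q\<^sup>2"
proof -
  let ?M = "Pi_pmf (hc_edges n) False (\<lambda>_. bernoulli_pmf q)"
  let ?Open = "{\<omega>. \<forall>e\<in>path2_edges u a b. \<omega> e}"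
  have "measure_pmf.prob ?M ?Open = q\<^sup>2"
    using assms by (simp add: prob_Pi_pmf_bernoulli_all path2_edges_subset card_path2_edges)
  moreover have "measure_pmf.prob ?M (space ?M - ?Open) = 1 - measure_pmf.prob ?M ?Open"
    by (rule measure_pmf.prob_compl) simp
  moreover have "space ?M - ?Open = {\<omega>. \<not> (\<forall>e\<in>path2_edges u a b. \<omega> e)}"
    by auto
  ultimately show ?thesis
    by simp
qed

lemma prob_no_open_path2_through:
  fixes q :: real
  assumes u: "u \<in> hc_vertices n" and S: "S \<subseteq> {0..<n}" and b: "b < n" "b \<notin> S"
    and q: "0 \<le> q" "q \<le> 1"
  shows "measure_pmf.prob (Pi_pmf (hc_edges n) False (\<lambda>_. bernoulli_pmf q))
           {\<omega>. \<forall>a\<in>S. \<not> (\<forall>e\<in>path2_edges u a b. \<omega> e)} = (1 - q\<^sup>2) ^ card S"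
proof -
  let ?M = "Pi_pmf (hc_edges n) False (\<lambda>_. bernoulli_pmf q)"
  have a: "a < n" "a \<noteq> b" if "a \<in> S" for a
    using that S b by auto
  have "measure_pmf.prob ?M {\<omega>. \<forall>a\<in>S. \<not> (\<forall>e\<in>path2_edges u a b. \<omega> e)} =
        (\<Prod>a\<in>S. measure_pmf.prob ?M {\<omega>. \<not> (\<forall>e\<in>path2_edges u a b. \<omega> e)})"
  proof (rule prob_Pi_pmf_Ball_indep[where D = "\<lambda>a. path2_edges u a b"])
    show "finite S"
      using S finite_subset by blast
    show "path2_edges u a b \<subseteq> hc_edges n" if "a \<in> S" for a
      using path2_edges_subset[OF u a(1)[OF that] b(1)] .
    show "disjoint_family_on (\<lambda>a. path2_edges u a b) S"
      unfolding disjoint_family_on_def using a(2) path2_edges_disjoint by blast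
  qed auto
  also have "\<dots> = (\<Prod>a\<in>S. 1 - q\<^sup>2)"
    using a by (intro prod.cong refl prob_path2_not_open[OF u _ b(1) _ q]) auto
  finally show ?thesis
    by simp
qed

lemma prob_no_neighbour_event_le:
  fixes R :: "nat set \<Rightarrow> (nat set set \<Rightarrow> 'b) \<Rightarrow> bool"
  assumes v: "v \<in> hc_vertices n" and B: "B \<subseteq> {0..<n}" and AB: "A \<inter> B = {}"
    and local: "\<And>u f g. u \<in> hc_vertices n \<Longrightarrow> \<forall>e\<in>subcube_edges n A u. f e = g e \<Longrightarrow> R u f = R u g"
    and bound: "\<And>u. u \<in> hc_vertices n \<Longrightarrow> measure_pmf.prob (Pi_pmf (hc_edges n) dflt p) {\<omega>. \<not> R u \<omega>} \<le> c"
  shows "measure_pmf.prob (Pi_pmf (hc_edges n) dflt p) {\<omega>. \<forall>b\<in>B. \<not> R (hc_flip v b) \<omega>} \<le> c ^ card B"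
proof -
  let ?M = "Pi_pmf (hc_edges n) dflt p"
  have flip_v: "hc_flip v b \<in> hc_vertices n" if "b \<in> B" for b
    using that B by (intro hc_flip_vertex v) auto
  have "measure_pmf.prob ?M {\<omega>. \<forall>b\<in>B. \<not> R (hc_flip v b) \<omega>} =
        (\<Prod>b\<in>B. measure_pmf.prob ?M {\<omega>. \<not> R (hc_flip v b) \<omega>})"
  proof (rule prob_Pi_pmf_Ball_indep[where D = "\<lambda>b. subcube_edges n A (hc_flip v b)"])
    show "finite B"
      using B finite_subset by blast
    show "disjoint_family_on (\<lambda>b. subcube_edges n A (hc_flip v b)) B"
      unfolding disjoint_family_on_def
      using AB by (auto intro!: subcube_edges_disjoint simp: hc_diff_flips)
    show "(\<not> R (hc_flip v b) f) = (\<not> R (hc_flip v b) g)"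
      if "b \<in> B" "\<forall>e\<in>subcube_edges n A (hc_flip v b). f e = g e" for b f g
      using local[OF flip_v] that by blast
  qed (auto simp: subcube_edges_def)
  also have "\<dots> \<le> (\<Prod>b\<in>B. c)"
    by (intro prod_mono conjI measure_nonneg bound flip_v)
  finally show ?thesis
    by simp
qed

section \<open>Vertices with many open paths of length two\<close>

lemma ex_disjoint_subsets:
  assumes "finite A" "finite I" "(\<Sum>i\<in>I. k i) \<le> card A"
  shows "\<exists>S. (\<forall>i\<in>I. S i \<subseteq> A \<and> card (S i) = k i) \<and> disjoint_family_on S I"
  using assms(2,3)
proof (induction I rule: finite_induct)
  case (insert i I)
  then obtain S where S: "\<forall>j\<in>I. S j \<subseteq> A \<and> card (S j) = k j" and disj: "disjoint_family_on S I"
    by auto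
  have "card (\<Union> (S ` I)) = (\<Sum>j\<in>I. k j)"
    using S disj insert.hyps(1) assms(1) by (subst card_UN_disjoint') (auto dest: finite_subset)
  then have "k i \<le> card (A - \<Union> (S ` I))"
    using S insert.hyps insert.prems assms(1) by (subst card_Diff_subset) (auto dest: finite_subset)
  then obtain T where T: "T \<subseteq> A - \<Union> (S ` I)" "card T = k i"
    by (rule obtain_subset_with_card_n)
  have "disjoint_family_on (S(i := T)) (insert i I)"
    using disj T(1) insert.hyps(2) by (auto simp: disjoint_family_on_def)
  moreover have "\<forall>j\<in>insert i I. (S(i := T)) j \<subseteq> A \<and> card ((S(i := T)) j) = k j"
    using S T insert.hyps(2) by auto
  ultimately show ?case
    by blast
qed (simp add: disjoint_family_on_def)

lemma obtain_coordinate_blocks: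
  assumes "finite A"
  obtains J and S :: "nat \<Rightarrow> 'a set"
  where "J \<subseteq> A" "\<And>r. r < 4 \<Longrightarrow> S r \<subseteq> A" "disjoint_family_on S {..<4}"
    "\<And>r. r < 4 \<Longrightarrow> J \<inter> S r = {}" "\<And>r. r < 4 \<Longrightarrow> card (S r) = card A div 8"
    "2 * card A \<le> card J * 4"
proof -
  define k where "k r = (if r < 4 then card A div 8 else card A - card A div 2)" for r :: nat
  have "{..<5} = insert 4 {..<4::nat}"
    by auto
  then have "(\<Sum>r<5. k r) = (card A - card A div 2) + 4 * (card A div 8)"
    by (simp add: k_def)
  then have "(\<Sum>r<5. k r) \<le> card A"
    by linarith
  then have "\<exists>T. (\<forall>r\<in>{..<5}. T r \<subseteq> A \<and> card (T r) = k r) \<and> disjoint_family_on T {..<5}"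
    by (rule ex_disjoint_subsets[OF assms finite_lessThan])
  then obtain T where T: "\<forall>r\<in>{..<5}. T r \<subseteq> A \<and> card (T r) = k r" and disj: "disjoint_family_on T {..<5}"
    by blast
  show thesis
  proof
    show "T 4 \<subseteq> A" "\<And>r. r < 4 \<Longrightarrow> T r \<subseteq> A" "\<And>r. r < 4 \<Longrightarrow> card (T r) = card A div 8"
      using T by (auto simp: k_def)
    show "disjoint_family_on T {..<4}"
      using disj by (rule disjoint_family_on_mono[rotated]) auto
    show "T 4 \<inter> T r = {}" if "r < 4" for r
      using disj that by (auto simp: disjoint_family_on_def)
    show "2 * card A \<le> card (T 4) * 4"
      using T by (simp add: k_def)
  qed
qed

definition path_rich ::
    "'k set \<Rightarrow> ('k \<Rightarrow> nat set) \<Rightarrow> nat set \<Rightarrow> nat set \<Rightarrow> (nat set set \<Rightarrow> bool) \<Rightarrow> bool" where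
  "path_rich K S J u \<omega> \<longleftrightarrow> (\<forall>b\<in>J. \<forall>k\<in>K. \<exists>a\<in>S k. \<forall>e\<in>path2_edges u a b. \<omega> e)"

lemma card_dist_2_vertices_ge_if_path_rich:
  assumes u: "u \<in> hc_vertices n" and A: "A \<subseteq> {0..<n}" and J: "J \<subseteq> A"
    and S: "\<And>k. k \<in> K \<Longrightarrow> S k \<subseteq> A" and disj: "disjoint_family_on S K"
    and JS: "\<And>k. k \<in> K \<Longrightarrow> J \<inter> S k = {}" and rich: "path_rich K S J u \<omega>"
  shows "card J * card K \<le> card (dist_2_vertices n \<omega> A u)"
proof -
  define a where "a b k = (SOME x. x \<in> S k \<and> (\<forall>e\<in>path2_edges u x b. \<omega> e))" for b k
  have a: "a b k \<in> S k \<and> (\<forall>e\<in>path2_edges u (a b k) b. \<omega> e)" if "b \<in> J" "k \<in> K" for b k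
    unfolding a_def by (rule someI_ex) (use rich that in \<open>unfold path_rich_def, blast\<close>)
  have ab: "a b k \<in> A" "a b k \<notin> J" "a b k \<noteq> b" if "b \<in> J" "k \<in> K" for b k
    using a[OF that] S[OF that(2)] JS[OF that(2)] that(1) by auto
  define w where "w bk = hc_flip (hc_flip u (a (fst bk) (snd bk))) (fst bk)" for bk
  have "w ` (J \<times> K) \<subseteq> dist_2_vertices n \<omega> A u"
    using a ab J unfolding w_def by (auto intro!: path2_end_in_dist_2_vertices[OF u A])
  moreover have "inj_on w (J \<times> K)"
  proof (rule inj_onI, clarify)
    fix b k b' k'
    assume bk: "b \<in> J" "k \<in> K" and bk': "b' \<in> J" "k' \<in> K" and "w (b, k) = w (b', k')"
    then have "{a b k, b} = {a b' k', b'}"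
      using hc_diff_flip_flip[OF ab(3)[OF bk], of u] hc_diff_flip_flip[OF ab(3)[OF bk'], of u]
      by (simp add: w_def)
    then have "b = b'" "a b k = a b' k'"
      using ab[OF bk] ab[OF bk'] bk bk' by (auto simp: doubleton_eq_iff)
    moreover have "a b k \<in> S k \<inter> S k'"
      using a[OF bk] a[OF bk'] calculation by auto
    ultimately show "b = b' \<and> k = k'"
      using disj bk bk' by (auto simp: disjoint_family_on_def)
  qed
  ultimately have "card (J \<times> K) \<le> card (dist_2_vertices n \<omega> A u)"
    by (metis card_image card_mono finite_dist_2_vertices)
  then show ?thesis
    by (simp add: card_cartesian_product)
qed

lemma prob_not_path_rich_le:
  fixes q :: real
  assumes u: "u \<in> hc_vertices n" and A: "A \<subseteq> {0..<n}" and J: "J \<subseteq> A"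
    and S: "\<And>k. k \<in> K \<Longrightarrow> S k \<subseteq> A" and JS: "\<And>k. k \<in> K \<Longrightarrow> J \<inter> S k = {}"
    and K: "finite K" and card_S: "\<And>k. k \<in> K \<Longrightarrow> card (S k) = t"
    and q: "0 \<le> q" "q \<le> 1"
  shows "measure_pmf.prob (Pi_pmf (hc_edges n) False (\<lambda>_. bernoulli_pmf q))
           {\<omega>. \<not> path_rich K S J u \<omega>} \<le> card J * card K * (1 - q\<^sup>2) ^ t"
proof -
  let ?M = "Pi_pmf (hc_edges n) False (\<lambda>_. bernoulli_pmf q)"
  define Fail where "Fail bk = {\<omega>. \<forall>a\<in>S (snd bk). \<not> (\<forall>e\<in>path2_edges u a (fst bk). \<omega> e)}" for bk
  have prob_Fail: "measure_pmf.prob ?M (Fail bk) = (1 - q\<^sup>2) ^ t" if bk_mem: "bk \<in> J \<times> K" for bk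
  proof -
    obtain b k where bk: "bk = (b, k)" "b \<in> J" "k \<in> K"
      using bk_mem by auto
    have "S k \<subseteq> {0..<n}" "b < n" "b \<notin> S k"
      using S[OF bk(3)] JS[OF bk(3)] A J bk(2) by auto
    then show ?thesis
      unfolding Fail_def bk(1) using prob_no_open_path2_through[OF u _ _ _ q] card_S[OF bk(3)] by simp
  qed
  have "{\<omega>. \<not> path_rich K S J u \<omega>} = (\<Union>bk\<in>J \<times> K. Fail bk)"
    unfolding path_rich_def Fail_def by fastforce
  also have "measure_pmf.prob ?M \<dots> \<le> (\<Sum>bk\<in>J \<times> K. measure_pmf.prob ?M (Fail bk))"
    using A J K by (intro measure_pmf.finite_measure_subadditive_finite) (auto dest: finite_subset)
  also have "\<dots> = card J * card K * (1 - q\<^sup>2) ^ t"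
    by (simp add: prob_Fail card_cartesian_product)
  finally show ?thesis .
qed

lemma path_rich_cong:
  assumes u: "u \<in> hc_vertices n" and A: "A \<subseteq> {0..<n}" and J: "J \<subseteq> A"
    and S: "\<And>k. k \<in> K \<Longrightarrow> S k \<subseteq> A" and JS: "\<And>k. k \<in> K \<Longrightarrow> J \<inter> S k = {}"
    and fg: "\<forall>e\<in>subcube_edges n A u. f e = g e"
  shows "path_rich K S J u f = path_rich K S J u g"
proof -
  have "(\<forall>e\<in>path2_edges u a b. f e) = (\<forall>e\<in>path2_edges u a b. g e)"
    if "b \<in> J" "k \<in> K" "a \<in> S k" for a b k
  proof -
    have "a \<in> A" "b \<in> A" "a \<noteq> b"
      using that J S[OF that(2)] JS[OF that(2)] by blast+
    then show ?thesis
      using fg path2_edges_subset_subcube_edges[OF u A] by blast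
  qed
  then show ?thesis
    unfolding path_rich_def by blast
qed

lemma prob_no_good_neighbour_le:
  fixes q :: real
  assumes v: "v \<in> hc_vertices n" and A: "A \<subseteq> {0..<n}" and B: "B \<subseteq> {0..<n}"
    and AB: "A \<inter> B = {}" and q: "0 \<le> q" "q \<le> 1"
  shows "measure_pmf.prob (Pi_pmf (hc_edges n) False (\<lambda>_. bernoulli_pmf q))
           {\<omega>. \<forall>b\<in>B. \<not> good_vertex n \<omega> A (card A) (hc_flip v b)}
         \<le> (4 * card A * (1 - q\<^sup>2) ^ (card A div 8)) ^ card B"
proof -
  let ?M = "Pi_pmf (hc_edges n) False (\<lambda>_. bernoulli_pmf q)"
  have "finite A"
    using A finite_subset by blast
  then obtain J and S :: "nat \<Rightarrow> nat set" where J: "J \<subseteq> A" and S: "\<And>r. r < 4 \<Longrightarrow> S r \<subseteq> A"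
    and disj: "disjoint_family_on S {..<4}" and JS: "\<And>r. r < 4 \<Longrightarrow> J \<inter> S r = {}"
    and card_S: "\<And>r. r < 4 \<Longrightarrow> card (S r) = card A div 8" and card_J: "2 * card A \<le> card J * 4"
    by (rule obtain_coordinate_blocks) blast
  let ?rich = "path_rich {..<4} S J"
  have good: "good_vertex n \<omega> A (card A) u" if "u \<in> hc_vertices n" "?rich u \<omega>" for u \<omega>
  proof -
    have "2 * card A \<le> card J * card {..<4::nat}"
      using card_J by simp
    also have "\<dots> \<le> card (dist_2_vertices n \<omega> A u)"
      using S JS by (intro card_dist_2_vertices_ge_if_path_rich[OF that(1) A J _ disj _ that(2)]) auto
    finally show ?thesis
      unfolding good_vertex_iff_card_dist_2_vertices .
  qed
  have "\<not> ?rich (hc_flip v b) \<omega>" if "b \<in> B" "\<not> good_vertex n \<omega> A (card A) (hc_flip v b)" for b \<omega>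
    using good[OF hc_flip_vertex[OF v]] that B by auto
  then have "{\<omega>. \<forall>b\<in>B. \<not> good_vertex n \<omega> A (card A) (hc_flip v b)} \<subseteq> {\<omega>. \<forall>b\<in>B. \<not> ?rich (hc_flip v b) \<omega>}"
    by blast
  then have "measure_pmf.prob ?M {\<omega>. \<forall>b\<in>B. \<not> good_vertex n \<omega> A (card A) (hc_flip v b)}
      \<le> measure_pmf.prob ?M {\<omega>. \<forall>b\<in>B. \<not> ?rich (hc_flip v b) \<omega>}"
    by (intro measure_pmf.finite_measure_mono) auto
  also have "\<dots> \<le> (4 * card A * (1 - q\<^sup>2) ^ (card A div 8)) ^ card B"
  proof (rule prob_no_neighbour_event_le[OF v B AB])
    show "?rich u f = ?rich u g" if "u \<in> hc_vertices n" "\<forall>e\<in>subcube_edges n A u. f e = g e" for u f g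
      using that S JS by (intro path_rich_cong[OF _ A J]) auto
    fix u assume u: "u \<in> hc_vertices n"
    have "measure_pmf.prob ?M {\<omega>. \<not> ?rich u \<omega>} \<le> card J * card {..<4::nat} * (1 - q\<^sup>2) ^ (card A div 8)"
      using S JS card_S by (intro prob_not_path_rich_le[OF u A J _ _ _ _ q]) auto
    also have "\<dots> \<le> 4 * card A * (1 - q\<^sup>2) ^ (card A div 8)"
      using card_mono[OF \<open>finite A\<close> J] q by (intro mult_right_mono) (auto simp: power_le_one)
    finally show "measure_pmf.prob ?M {\<omega>. \<not> ?rich u \<omega>} \<le> 4 * card A * (1 - q\<^sup>2) ^ (card A div 8)" .
  qed
  finally show ?thesis .
qed

lemma prob_all_have_good_neighbour_ge:
  fixes q :: real
  assumes A: "A \<subseteq> {0..<n}" and B: "B \<subseteq> {0..<n}" and AB: "A \<inter> B = {}" and q: "0 \<le> q" "q \<le> 1"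
  shows "1 - 2 ^ n * (4 * card A * (1 - q\<^sup>2) ^ (card A div 8)) ^ card B \<le>
    measure_pmf.prob (Pi_pmf (hc_edges n) False (\<lambda>_. bernoulli_pmf q))
      {\<omega>. \<forall>v\<in>hc_vertices n. \<exists>u\<in>hc_vertices n.
              card (hc_diff v u) = 1 \<and> hc_diff v u \<subseteq> B \<and> good_vertex n \<omega> A (card A) u}"
    (is "1 - 2 ^ n * ?c ^ card B \<le> measure_pmf.prob ?M ?G")
proof -
  let ?Bad = "\<lambda>v. {\<omega>. \<forall>b\<in>B. \<not> good_vertex n \<omega> A (card A) (hc_flip v b)}"
  have "space ?M - ?G \<subseteq> (\<Union>v\<in>hc_vertices n. ?Bad v)"
  proof
    fix \<omega> assume "\<omega> \<in> space ?M - ?G"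
    then obtain v where v: "v \<in> hc_vertices n" and no_good: "\<forall>u\<in>hc_vertices n.
        card (hc_diff v u) = 1 \<longrightarrow> hc_diff v u \<subseteq> B \<longrightarrow> \<not> good_vertex n \<omega> A (card A) u"
      by auto
    have "\<not> good_vertex n \<omega> A (card A) (hc_flip v b)" if "b \<in> B" for b
      using no_good hc_flip_vertex[OF v] that B by auto
    with v show "\<omega> \<in> (\<Union>v\<in>hc_vertices n. ?Bad v)"
      by blast
  qed
  then have "measure_pmf.prob ?M (space ?M - ?G) \<le> measure_pmf.prob ?M (\<Union>v\<in>hc_vertices n. ?Bad v)"
    by (intro measure_pmf.finite_measure_mono) auto
  also have "\<dots> \<le> (\<Sum>v\<in>hc_vertices n. measure_pmf.prob ?M (?Bad v))"
    by (intro measure_pmf.finite_measure_subadditive_finite) auto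
  also have "\<dots> \<le> (\<Sum>v\<in>hc_vertices n. ?c ^ card B)"
    by (intro sum_mono prob_no_good_neighbour_le A B AB q)
  also have "\<dots> = 2 ^ n * ?c ^ card B"
    by (simp add: card_hc_vertices)
  finally show ?thesis
    using measure_pmf.prob_compl[of ?G ?M] by simp
qed

section \<open>Asymptotics\<close>

lemma le_mult_Suc_div_pred:
  fixes c n :: nat
  assumes "0 < c"
  shows "n \<le> c * ((n - 1) div c + 1)"
  using dividend_less_times_div[OF assms, of "n - 1"] by (simp add: algebra_simps)

lemma filterlim_pred_div_at_top:
  assumes "0 < (c::nat)"
  shows "filterlim (\<lambda>n. (n - 1) div c) at_top sequentially"
proof (rule filterlim_at_top[THEN iffD2], intro allI eventually_sequentiallyI)
  fix Z n :: nat assume "c * Z + 1 \<le> n"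
  then have "(c * Z) div c \<le> (n - 1) div c"
    by (intro div_le_mono) simp
  then show "Z \<le> (n - 1) div c"
    using assms by simp
qed

lemma one_minus_power_le_exp:
  fixes x :: real
  assumes "x \<le> 1"
  shows "(1 - x) ^ t \<le> exp (- x * t)"
proof -
  have "(1 - x) ^ t \<le> exp (- x) ^ t"
    using assms exp_ge_add_one_self[of "- x"] by (intro power_mono) auto
  then show ?thesis
    by (simp add: exp_of_nat_mult[symmetric] mult.commute)
qed

lemma two_power_times_power_tendsto_zero:
  fixes q :: "nat \<Rightarrow> real" and M :: "nat \<Rightarrow> nat" and c :: nat
  assumes q: "q \<longlonglongrightarrow> 0" and M: "filterlim M at_top sequentially"
    and n_le: "\<And>n. n \<le> c * (M n + 1)"
  shows "(\<lambda>n. 2 ^ n * q n ^ M n) \<longlonglongrightarrow> 0"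
proof (rule Lim_null_comparison)
  have "eventually (\<lambda>n. norm (q n) < 1 / 2 ^ Suc c) sequentially"
    using tendsto_norm_zero[OF q] by (rule order_tendstoD) simp
  then show "eventually (\<lambda>n. norm (2 ^ n * q n ^ M n) \<le> 2 ^ c * (1 / 2) ^ M n) sequentially"
  proof eventually_elim
    case (elim n)
    have "norm (2 ^ n * q n ^ M n) = 2 ^ n * \<bar>q n\<bar> ^ M n"
      by (simp add: abs_mult power_abs)
    also have "\<dots> \<le> 2 ^ (c * (M n + 1)) * \<bar>q n\<bar> ^ M n"
      using n_le[of n] by (intro mult_right_mono power_increasing) auto
    also have "\<dots> = 2 ^ c * (2 ^ c * \<bar>q n\<bar>) ^ M n"
      by (simp add: power_add power_mult power_mult_distrib mult.commute)
    also have "\<dots> \<le> 2 ^ c * (1 / 2) ^ M n"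
      using elim by (intro mult_left_mono power_mono) (auto simp: field_simps)
    finally show ?case .
  qed
  show "(\<lambda>n. 2 ^ c * (1 / 2) ^ M n) \<longlonglongrightarrow> (0::real)"
    by (intro tendsto_mult_right_zero tendsto_power_zero[OF M]) simp
qed

lemma real_nat_powr_neg_le_1: "0 \<le> \<alpha> \<Longrightarrow> real n powr - \<alpha> \<le> 1"
  by (cases "n = 0") (simp_all add: powr_minus divide_simps ge_one_powr_ge_zero)

lemma real_pred_div_div_8_ge: "0 < c \<Longrightarrow> real n / (8 * real c) - 1 \<le> real ((n - 1) div c div 8)"
proof -
  assume c: "0 < c"
  define M where "M = (n - 1) div c"
  have "n \<le> c * (M + 1)"
    unfolding M_def using le_mult_Suc_div_pred[OF c] .
  also have "\<dots> \<le> c * (8 * (M div 8) + 8)"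
    by (intro mult_le_mono2) linarith
  finally have "real n \<le> real (c * (8 * (M div 8) + 8))"
    by (rule of_nat_mono)
  with c show ?thesis
    unfolding M_def by (simp add: field_simps)
qed

lemma failure_bound_le:
  fixes \<alpha> :: real and c n :: nat
  assumes \<alpha>: "0 \<le> \<alpha>" and c: "0 < c" and n: "1 \<le> n"
  shows "4 * real ((n - 1) div c) * (1 - (real n powr - \<alpha>)\<^sup>2) ^ ((n - 1) div c div 8)
         \<le> 4 * real n * exp (1 - real n powr (1 - 2 * \<alpha>) / (8 * real c))"
proof -
  define t where "t = (n - 1) div c div 8"
  define p2 where "p2 = real n powr (- 2 * \<alpha>)"
  have p2_eq: "(real n powr - \<alpha>)\<^sup>2 = p2"
    using n by (simp add: p2_def powr_power)
  have p2_bounds: "0 \<le> p2" "p2 \<le> 1"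
    using real_nat_powr_neg_le_1[OF \<alpha>, of n] p2_eq by (auto simp: power_le_one)
  have "p2 * (real n / (8 * real c) - 1) \<le> p2 * real t"
    unfolding t_def using real_pred_div_div_8_ge[OF c, of n] p2_bounds(1) by (rule mult_left_mono)
  moreover have "p2 * real n = real n powr (1 - 2 * \<alpha>)"
    using n by (simp add: p2_def powr_mult_base mult.commute)
  ultimately have "- p2 * real t \<le> 1 - real n powr (1 - 2 * \<alpha>) / (8 * real c)"
    using p2_bounds by (simp add: field_simps)
  then have "(1 - p2) ^ t \<le> exp (1 - real n powr (1 - 2 * \<alpha>) / (8 * real c))"
    using one_minus_power_le_exp[OF p2_bounds(2), of t] by (simp add: order_trans)
  moreover have "real ((n - 1) div c) \<le> real n"
    using div_le_dividend[of "n - 1" c] by linarith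
  ultimately show ?thesis
    using p2_bounds unfolding p2_eq t_def[symmetric] by (intro mult_mono) auto
qed

lemma failure_bound_tendsto_zero:
  fixes \<alpha> :: real and c :: nat
  assumes \<alpha>: "0 < \<alpha>" "\<alpha> < 1/2" and c: "0 < c"
  shows "(\<lambda>n. 4 * real ((n - 1) div c) * (1 - (real n powr - \<alpha>)\<^sup>2) ^ ((n - 1) div c div 8))
           \<longlonglongrightarrow> 0"
proof (rule tendsto_sandwich[where f = "\<lambda>_. 0"])
  let ?g = "\<lambda>n::nat. 4 * real n * exp (1 - real n powr (1 - 2 * \<alpha>) / (8 * real c))"
  have "1 - 2 * \<alpha> > 0" "real c > 0"
    using \<alpha> c by auto
  then show "?g \<longlonglongrightarrow> 0"
    by real_asymp
  show "eventually (\<lambda>n. 4 * real ((n - 1) div c) * (1 - (real n powr - \<alpha>)\<^sup>2) ^ ((n - 1) div c div 8)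
          \<le> ?g n) sequentially"
    using \<alpha> c by (intro eventually_sequentiallyI[of 1] failure_bound_le) auto
  have "(real n powr - \<alpha>)\<^sup>2 \<le> 1" for n
    using real_nat_powr_neg_le_1[of \<alpha> n] \<alpha> by (simp add: power_le_one)
  then show "eventually (\<lambda>n. 0 \<le> 4 * real ((n - 1) div c) * (1 - (real n powr - \<alpha>)\<^sup>2) ^ ((n - 1) div c div 8))
      sequentially"
    by simp
qed simp

theorem mainTheorem4:
  fixes \<alpha> :: real and l :: nat and m :: "nat \<Rightarrow> nat"
    and F :: "nat \<Rightarrow> nat \<Rightarrow> nat set"
  assumes "0 < \<alpha>" and "\<alpha> < 1/2" and "l \<ge> 1"
    and "\<And>n. m n = (n - 1) div (l + 2)"
    and "\<And>n. disjoint_family_on (F n) {..<l+2}"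
    and "\<And>n i. i < l + 2 \<Longrightarrow> F n i \<subseteq> {0..<n} \<and> card (F n i) = m n"
  shows "(\<lambda>n. measure_pmf.prob (percolation n (real n powr (-\<alpha>)))
            {\<omega>. \<forall>v \<in> hc_vertices n. \<exists>u \<in> hc_vertices n.
                 card (hc_diff v u) = 1 \<and> hc_diff v u \<subseteq> F n 1 \<and>
                 good_vertex n \<omega> (F n 0) (m n) u})
         \<longlonglongrightarrow> 1"
    (is "?P \<longlonglongrightarrow> 1")
proof -
  define q where "q n = 4 * real (m n) * (1 - (real n powr - \<alpha>)\<^sup>2) ^ (m n div 8)" for n
  have "(\<lambda>n. 2 ^ n * q n ^ m n) \<longlonglongrightarrow> 0"
    using assms(1,2) unfolding q_def assms(4)
    by (intro two_power_times_power_tendsto_zero[where c = "l + 2"] failure_bound_tendsto_zero filterlim_pred_div_at_top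
        le_mult_Suc_div_pred) simp_all
  from tendsto_diff[OF tendsto_const[of 1] this]
  have lower_lim: "(\<lambda>n. 1 - 2 ^ n * q n ^ m n) \<longlonglongrightarrow> 1"
    by simp
  have lower: "1 - 2 ^ n * q n ^ m n \<le> ?P n" for n
  proof -
    have F: "F n 0 \<subseteq> {0..<n}" "F n 1 \<subseteq> {0..<n}" and card_F: "card (F n 0) = m n" "card (F n 1) = m n"
      using assms(6)[of 0 n] assms(6)[of 1 n] by auto
    have "F n 0 \<inter> F n 1 = {}"
      using assms(5)[of n] unfolding disjoint_family_on_def by auto
    from prob_all_have_good_neighbour_ge[OF F this powr_ge_zero real_nat_powr_neg_le_1]
    show ?thesis
      unfolding q_def percolation_def card_F using assms(1) by simp
  qed
  show ?thesis
  proof (rule tendsto_sandwich[OF _ _ lower_lim tendsto_const])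
    show "eventually (\<lambda>n. 1 - 2 ^ n * q n ^ m n \<le> ?P n) sequentially"
      using lower by (intro always_eventually) blast
  qed simp
qed

end
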